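(* There is an absolute constant $C$ such that for every prime power $q$, every $0<\varepsilon<1$, and every (unweighted) linear code $\mathcal{C}\subseteq\mathbb{F}_q^n$ of dimension $k \ge 1$, $\mathcal{C}$ has a $(1\pm\varepsilon)$-sparsifier of size at most $C k^2 \log_2(q)/\varepsilon^2$. Moreover, one such sparsifier is obtained with positive probability as follows: for each coordinate $i$ in the support of $\mathcal{C}$ let $w_i = \min\{\mathrm{wt}(c) : c\in\mathcal{C}, c_i\neq 0\}$, and sample coordinate $i$ independently with probability $p_i=\min(1, 10 k\log_2(q)/(\varepsilon^2 w_i))$, assigning weight $1/p_i$ if sampled.
   Context: $\mathrm{wt}(c)$ is the number of nonzero coordinates. The support of $\mathcal{C}$ is the set of coordinates $i$ such that some codeword is nonzero at $i$. A $(1\pm\varepsilon)$-sparsifier of size $s$ is a set $S\subseteq[n]$, $|S|\le s$, with nonnegative weights $(w'_i)_{i\in S}$ such that $(1-\varepsilon)\mathrm{wt}(v)\le\sum_{i\in S:v_i\neq0}w'_i\le(1+\varepsilon)\mathrm{wt}(v)$ for all $v\in\mathcal{C}$. *)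

theory Defs
  imports "HOL-Algebra.Ring" "HOL-Probability.Product_PMF"
begin

text \<open>Finite fields are represented as HOL-Algebra fields whose carrier is a finite set
of natural numbers (every finite field is isomorphic to such a one); this lets the constant
C be quantified before the field.\<close>

definition vecs :: "nat ring \<Rightarrow> nat \<Rightarrow> (nat \<Rightarrow> nat) set" where
  "vecs R n = {v. (\<forall>i<n. v i \<in> carrier R) \<and> (\<forall>i. n \<le> i \<longrightarrow> v i = \<zero>\<^bsub>R\<^esub>)}"

definition zero_vec :: "nat ring \<Rightarrow> nat \<Rightarrow> nat \<Rightarrow> nat" where
  "zero_vec R n = (\<lambda>i. \<zero>\<^bsub>R\<^esub>)"

definition vadd :: "nat ring \<Rightarrow> nat \<Rightarrow> (nat \<Rightarrow> nat) \<Rightarrow> (nat \<Rightarrow> nat) \<Rightarrow> nat \<Rightarrow> nat" where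
  "vadd R n u v = (\<lambda>i. if i < n then u i \<oplus>\<^bsub>R\<^esub> v i else \<zero>\<^bsub>R\<^esub>)"

definition smult_vec :: "nat ring \<Rightarrow> nat \<Rightarrow> nat \<Rightarrow> (nat \<Rightarrow> nat) \<Rightarrow> nat \<Rightarrow> nat" where
  "smult_vec R n a v = (\<lambda>i. if i < n then a \<otimes>\<^bsub>R\<^esub> v i else \<zero>\<^bsub>R\<^esub>)"

definition linear_code :: "nat ring \<Rightarrow> nat \<Rightarrow> (nat \<Rightarrow> nat) set \<Rightarrow> bool" where
  "linear_code R n Cd \<longleftrightarrow> Cd \<subseteq> vecs R n \<and> zero_vec R n \<in> Cd \<and>
     (\<forall>u\<in>Cd. \<forall>v\<in>Cd. vadd R n u v \<in> Cd) \<and>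
     (\<forall>a\<in>carrier R. \<forall>v\<in>Cd. smult_vec R n a v \<in> Cd)"

definition lin_comb :: "nat ring \<Rightarrow> nat \<Rightarrow> nat \<Rightarrow> (nat \<Rightarrow> nat) \<Rightarrow> (nat \<Rightarrow> nat \<Rightarrow> nat) \<Rightarrow> nat \<Rightarrow> nat" where
  "lin_comb R n k a b = (\<lambda>i. if i < n then finsum R (\<lambda>j. a j \<otimes>\<^bsub>R\<^esub> b j i) {..<k} else \<zero>\<^bsub>R\<^esub>)"

definition code_dim :: "nat ring \<Rightarrow> nat \<Rightarrow> (nat \<Rightarrow> nat) set \<Rightarrow> nat \<Rightarrow> bool" where
  "code_dim R n Cd k \<longleftrightarrow> (\<exists>b. (\<forall>j<k. b j \<in> Cd) \<and>
     Cd = {lin_comb R n k a b | a. \<forall>j<k. a j \<in> carrier R} \<and>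
     (\<forall>a. (\<forall>j<k. a j \<in> carrier R) \<longrightarrow> lin_comb R n k a b = zero_vec R n \<longrightarrow> (\<forall>j<k. a j = \<zero>\<^bsub>R\<^esub>)))"

definition wt :: "nat ring \<Rightarrow> nat \<Rightarrow> (nat \<Rightarrow> nat) \<Rightarrow> nat" where
  "wt R n v = card {i. i < n \<and> v i \<noteq> \<zero>\<^bsub>R\<^esub>}"

definition code_support :: "nat ring \<Rightarrow> nat \<Rightarrow> (nat \<Rightarrow> nat) set \<Rightarrow> nat set" where
  "code_support R n Cd = {i. i < n \<and> (\<exists>c\<in>Cd. c i \<noteq> \<zero>\<^bsub>R\<^esub>)}"

definition is_sparsifier :: "nat ring \<Rightarrow> nat \<Rightarrow> (nat \<Rightarrow> nat) set \<Rightarrow> real \<Rightarrow> real \<Rightarrow> nat set \<Rightarrow> (nat \<Rightarrow> real) \<Rightarrow> bool" where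
  "is_sparsifier R n Cd eps s S w' \<longleftrightarrow> S \<subseteq> {..<n} \<and> real (card S) \<le> s \<and>
     (\<forall>i\<in>S. 0 \<le> w' i) \<and>
     (\<forall>v\<in>Cd. (1 - eps) * real (wt R n v) \<le> (\<Sum>i\<in>{i\<in>S. v i \<noteq> \<zero>\<^bsub>R\<^esub>}. w' i) \<and>
             (\<Sum>i\<in>{i\<in>S. v i \<noteq> \<zero>\<^bsub>R\<^esub>}. w' i) \<le> (1 + eps) * real (wt R n v))"

definition min_wt :: "nat ring \<Rightarrow> nat \<Rightarrow> (nat \<Rightarrow> nat) set \<Rightarrow> nat \<Rightarrow> nat" where
  "min_wt R n Cd i = Min (wt R n ` {c\<in>Cd. c i \<noteq> \<zero>\<^bsub>R\<^esub>})"

definition samp_prob :: "nat ring \<Rightarrow> nat \<Rightarrow> (nat \<Rightarrow> nat) set \<Rightarrow> nat \<Rightarrow> real \<Rightarrow> nat \<Rightarrow> real" where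
  "samp_prob R n Cd k eps i =
     min 1 (10 * real k * log 2 (real (card (carrier R))) / (eps\<^sup>2 * real (min_wt R n Cd i)))"

definition sample_pmf :: "nat ring \<Rightarrow> nat \<Rightarrow> (nat \<Rightarrow> nat) set \<Rightarrow> nat \<Rightarrow> real \<Rightarrow> nat set pmf" where
  "sample_pmf R n Cd k eps =
     map_pmf (\<lambda>f. {i\<in>code_support R n Cd. f i})
       (Pi_pmf (code_support R n Cd) False (\<lambda>i. bernoulli_pmf (samp_prob R n Cd k eps i)))"

end

theory Submission
  imports Defs
begin

text \<open>For a
  codeword v of weight W every coordinate of its support has w_i \<le> W, so the reweighted count of
  its sampled support coordinates is a sum of independent terms bounded by eps^2 W / (10 k log q);
  a Chernoff bound makes it (1 \<plusminus> eps)-accurate except with probability 2 exp(-5/2 k log q), and a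
  union bound over the at most q^k codewords leaves failure probability below 1/2. The expected
  sample size is the sum of the p_i, and the sum of the 1 / w_i is at most k, so by Markov's
  inequality the sample exceeds 40 k^2 log q / eps^2 with probability at most 1/4.\<close>

section \<open>Chernoff bounds for independent Bernoulli sampling\<close>

lemma exp_le_1_plus_x_plus_sq:
  fixes x :: real
  assumes "\<bar>x\<bar> \<le> 1"
  shows "exp x \<le> 1 + x + x\<^sup>2"
proof (cases "0 \<le> x")
  case True
  then show ?thesis using exp_bound assms by auto
next
  case False
  define y where "y = - x"
  have y: "0 < y" "y \<le> 1" using False assms by (auto simp: y_def)
  have pos: "0 < 1 - y + y\<^sup>2" using y by (smt (verit) power2_eq_square mult_pos_pos)
  have "(1 + y + y\<^sup>2 / 2) * (1 - y + y\<^sup>2) = 1 + y\<^sup>2/2 + y^3/2 + y^4/2"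
    by (simp add: power2_eq_square power3_eq_cube power4_eq_xxxx field_simps)
  then have "1 \<le> (1 + y + y\<^sup>2 / 2) * (1 - y + y\<^sup>2)" using y by simp
  also have "\<dots> \<le> exp y * (1 - y + y\<^sup>2)"
    using exp_lower_Taylor_quadratic y pos by (intro mult_right_mono) auto
  finally have "1 / exp y \<le> 1 - y + y\<^sup>2" by (simp add: field_simps)
  then show ?thesis by (simp add: y_def exp_minus field_simps power2_eq_square)
qed

definition bernoulli_sampling :: "'a set \<Rightarrow> ('a \<Rightarrow> real) \<Rightarrow> ('a \<Rightarrow> bool) pmf" where
  "bernoulli_sampling A p = Pi_pmf A False (\<lambda>i. bernoulli_pmf (p i))"

text \<open>The Horvitz--Thompson estimator of card T (it is unbiased).\<close>
definition ht_sum :: "'a set \<Rightarrow> ('a \<Rightarrow> real) \<Rightarrow> ('a \<Rightarrow> bool) \<Rightarrow> real" where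
  "ht_sum T p f = (\<Sum>i\<in>T. if f i then 1 / p i else 0)"

lemma finite_set_bernoulli_sampling:
  "finite A \<Longrightarrow> finite (set_pmf (bernoulli_sampling A p))"
  unfolding bernoulli_sampling_def by (rule finite_subset[OF set_Pi_pmf_subset']) auto

lemma integrable_bernoulli_sampling:
  fixes g :: "('a \<Rightarrow> bool) \<Rightarrow> real"
  shows "finite A \<Longrightarrow> integrable (measure_pmf (bernoulli_sampling A p)) g"
  by (intro integrable_measure_pmf_finite finite_set_bernoulli_sampling)

lemma expectation_card_bernoulli_sampling:
  assumes fin: "finite A" and p01: "\<And>i. i \<in> A \<Longrightarrow> 0 \<le> p i \<and> p i \<le> 1"
  shows "measure_pmf.expectation (bernoulli_sampling A p) (\<lambda>f. real (card {i\<in>A. f i}))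
           = (\<Sum>i\<in>A. p i)"
proof -
  let ?P = "bernoulli_sampling A p"
  have indicator: "measure_pmf.expectation ?P (\<lambda>f. if f i then 1 else 0) = p i" if "i \<in> A" for i
  proof -
    have "measure_pmf.expectation ?P (\<lambda>f. if f i then 1 else 0)
        = measure_pmf.expectation (map_pmf (\<lambda>f. f i) ?P) (\<lambda>b. if b then 1 else 0 :: real)"
      by simp
    also have "map_pmf (\<lambda>f. f i) ?P = bernoulli_pmf (p i)"
      using that fin by (simp add: bernoulli_sampling_def Pi_pmf_component)
    finally show ?thesis using p01[OF that] by simp
  qed
  have "measure_pmf.expectation ?P (\<lambda>f. real (card {i\<in>A. f i}))
      = measure_pmf.expectation ?P (\<lambda>f. \<Sum>i\<in>A. if f i then 1 else 0)"
    using sum.inter_filter[OF fin, of "\<lambda>_. 1::real"] by simp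
  also have "\<dots> = (\<Sum>i\<in>A. measure_pmf.expectation ?P (\<lambda>f. if f i then 1 else 0))"
    by (intro Bochner_Integration.integral_sum integrable_bernoulli_sampling fin)
  also have "\<dots> = (\<Sum>i\<in>A. p i)"
    using indicator by simp
  finally show ?thesis .
qed

lemma prob_card_bernoulli_sampling_gt:
  assumes "finite A" and "\<And>i. i \<in> A \<Longrightarrow> 0 \<le> p i \<and> p i \<le> 1" and "0 < s"
  shows "measure_pmf.prob (bernoulli_sampling A p) {f. s < real (card {i\<in>A. f i})}
           \<le> (\<Sum>i\<in>A. p i) / s"
proof -
  let ?P = "bernoulli_sampling A p"
  have "measure_pmf.prob ?P {f. s < real (card {i\<in>A. f i})}
      \<le> measure_pmf.prob ?P {f \<in> space (measure_pmf ?P). s \<le> real (card {i\<in>A. f i})}"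
    by (intro measure_pmf.finite_measure_mono) auto
  also have "\<dots> \<le> measure_pmf.expectation ?P (\<lambda>f. real (card {i\<in>A. f i})) / s"
    using assms(1,3)
    by (intro integral_Markov_inequality_measure[where A = UNIV] integrable_bernoulli_sampling) auto
  finally show ?thesis using expectation_card_bernoulli_sampling[OF assms(1,2)] by simp
qed

text \<open>Each summand is at most M, and exp x \<le> 1 + x + x^2 bounds every factor of the moment
  generating function since |lam| M \<le> 1.\<close>
lemma expectation_exp_ht_sum_le:
  assumes fin: "finite A" and TA: "T \<subseteq> A"
    and p01: "\<And>i. i \<in> A \<Longrightarrow> 0 \<le> p i \<and> p i \<le> 1"
    and pT: "\<And>i. i \<in> T \<Longrightarrow> 0 < p i \<and> 1 / p i \<le> M"
    and lam: "\<bar>lam\<bar> * M \<le> 1"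
  shows "measure_pmf.expectation (bernoulli_sampling A p) (\<lambda>f. exp (lam * ht_sum T p f))
           \<le> exp (real (card T) * (lam + lam\<^sup>2 * M))"
proof -
  define h where "h i b = (if i \<in> T \<and> b then exp (lam / p i) else 1)" for i b
  have fin_T: "finite T" using fin TA finite_subset by blast
  have prod_eq: "exp (lam * ht_sum T p f) = (\<Prod>i\<in>A. h i (f i))" for f
  proof -
    have "exp (lam * ht_sum T p f) = (\<Prod>i\<in>T. h i (f i))"
      unfolding ht_sum_def sum_distrib_left exp_sum[OF fin_T] by (intro prod.cong) (auto simp: h_def)
    also have "\<dots> = (\<Prod>i\<in>A. h i (f i))"
      using TA fin by (intro prod.mono_neutral_left) (auto simp: h_def)
    finally show ?thesis .
  qed
  have factor_le: "measure_pmf.expectation (bernoulli_pmf (p i)) (h i) \<le> exp (lam + lam\<^sup>2 * M)"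
    if "i \<in> T" for i
  proof -
    have pi: "0 < p i" "p i \<le> 1" "1 / p i \<le> M" using pT[OF that] p01[of i] TA that by auto
    have "\<bar>lam / p i\<bar> \<le> \<bar>lam\<bar> * M"
      using pi mult_left_mono[of "1 / p i" M "\<bar>lam\<bar>"] by (simp add: abs_divide)
    then have "exp (lam / p i) \<le> 1 + lam / p i + (lam / p i)\<^sup>2"
      using lam by (intro exp_le_1_plus_x_plus_sq) simp
    then have "measure_pmf.expectation (bernoulli_pmf (p i)) (h i)
        \<le> (1 + lam / p i + (lam / p i)\<^sup>2) * p i + (1 - p i)"
      using pi that by (simp add: h_def mult_right_mono)
    also have "\<dots> = 1 + lam + lam\<^sup>2 * (1 / p i)"
      using pi by (simp add: field_simps power2_eq_square)
    also have "\<dots> \<le> 1 + lam + lam\<^sup>2 * M" using pi by (intro add_left_mono mult_left_mono) auto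
    also have "\<dots> \<le> exp (lam + lam\<^sup>2 * M)" by (simp add: add.assoc exp_ge_add_one_self)
    finally show ?thesis .
  qed
  have "measure_pmf.expectation (bernoulli_sampling A p) (\<lambda>f. exp (lam * ht_sum T p f))
      = (\<Prod>i\<in>A. measure_pmf.expectation (bernoulli_pmf (p i)) (h i))"
    unfolding prod_eq bernoulli_sampling_def using fin
    by (intro expectation_prod_Pi_pmf integrable_measure_pmf_finite) (auto simp: h_def)
  also have "\<dots> = (\<Prod>i\<in>T. measure_pmf.expectation (bernoulli_pmf (p i)) (h i))"
    using p01 by (intro prod.mono_neutral_right[OF fin TA]) (auto simp: h_def)
  also have "\<dots> \<le> (\<Prod>i\<in>T. exp (lam + lam\<^sup>2 * M))"
    using factor_le p01 TA by (intro prod_mono) (auto simp: h_def)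
  also have "\<dots> = exp (real (card T) * (lam + lam\<^sup>2 * M))"
    by (simp add: exp_of_nat_mult)
  finally show ?thesis .
qed

lemma prob_ht_sum_chernoff:
  assumes "finite A" "T \<subseteq> A"
    and "\<And>i. i \<in> A \<Longrightarrow> 0 \<le> p i \<and> p i \<le> 1"
    and "\<And>i. i \<in> T \<Longrightarrow> 0 < p i \<and> 1 / p i \<le> M"
    and "\<bar>lam\<bar> * M \<le> 1"
  shows "measure_pmf.prob (bernoulli_sampling A p) {f. lam * a \<le> lam * ht_sum T p f}
           \<le> exp (real (card T) * (lam + lam\<^sup>2 * M) - lam * a)"
proof -
  let ?P = "bernoulli_sampling A p"
  have "measure_pmf.prob ?P {f. lam * a \<le> lam * ht_sum T p f}
      = measure_pmf.prob ?P {f \<in> space (measure_pmf ?P). exp (lam * a) \<le> exp (lam * ht_sum T p f)}"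
    by simp
  also have "\<dots> \<le> measure_pmf.expectation ?P (\<lambda>f. exp (lam * ht_sum T p f)) / exp (lam * a)"
    using assms(1)
    by (intro integral_Markov_inequality_measure[where A = UNIV] integrable_bernoulli_sampling) auto
  also have "\<dots> \<le> exp (real (card T) * (lam + lam\<^sup>2 * M)) / exp (lam * a)"
    by (intro divide_right_mono expectation_exp_ht_sum_le assms) auto
  finally show ?thesis by (simp add: exp_diff)
qed

lemma prob_ht_sum_deviates:
  assumes "finite A" "T \<subseteq> A"
    and "\<And>i. i \<in> A \<Longrightarrow> 0 \<le> p i \<and> p i \<le> 1"
    and "\<And>i. i \<in> T \<Longrightarrow> 0 < p i \<and> 1 / p i \<le> M"
    and M: "0 < M" and eps: "0 < eps" "eps \<le> 1"
  shows "measure_pmf.prob (bernoulli_sampling A p)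
           {f. \<not> ((1 - eps) * real (card T) \<le> ht_sum T p f \<and> ht_sum T p f \<le> (1 + eps) * real (card T))}
         \<le> 2 * exp (- (eps\<^sup>2 * real (card T) / (4 * M)))"
proof -
  let ?P = "bernoulli_sampling A p" and ?W = "real (card T)"
  let ?bound = "exp (- (eps\<^sup>2 * ?W / (4 * M)))"
  have tail: "measure_pmf.prob ?P {f. lam * ((1 + s * eps) * ?W) \<le> lam * ht_sum T p f} \<le> ?bound"
    if "s = 1 \<or> s = -1" and "lam = s * eps / (2 * M)" for s lam
  proof -
    have "\<bar>lam\<bar> * M \<le> 1" using that M eps by (auto simp: abs_divide)
    from prob_ht_sum_chernoff[OF assms(1-4) this, where a = "(1 + s * eps) * ?W"]
    have "measure_pmf.prob ?P {f. lam * ((1 + s * eps) * ?W) \<le> lam * ht_sum T p f}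
        \<le> exp (?W * (lam + lam\<^sup>2 * M) - lam * ((1 + s * eps) * ?W))" .
    also have "?W * (lam + lam\<^sup>2 * M) - lam * ((1 + s * eps) * ?W) = - (eps\<^sup>2 * ?W / (4 * M))"
      using that(1) M unfolding that(2) by (auto simp: field_simps power2_eq_square)
    finally show ?thesis .
  qed
  have c: "0 < eps / (2 * M)" using M eps by simp
  have "{f. (1 + eps) * ?W \<le> ht_sum T p f}
      = {f. eps / (2 * M) * ((1 + 1 * eps) * ?W) \<le> eps / (2 * M) * ht_sum T p f}"
    using c by (simp only: mult_le_cancel_left_pos mult_1)
  then have hi: "measure_pmf.prob ?P {f. (1 + eps) * ?W \<le> ht_sum T p f} \<le> ?bound"
    by (simp only:) (rule tail; simp)
  have "{f. ht_sum T p f \<le> (1 - eps) * ?W}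
      = {f. - eps / (2 * M) * ((1 + -1 * eps) * ?W) \<le> - eps / (2 * M) * ht_sum T p f}"
    using c by (simp only: mult_le_cancel_left_neg mult_minus1 diff_conv_add_uminus
        neg_less_0_iff_less minus_divide_left)
  then have lo: "measure_pmf.prob ?P {f. ht_sum T p f \<le> (1 - eps) * ?W} \<le> ?bound"
    by (simp only:) (rule tail; simp)
  have "measure_pmf.prob ?P {f. \<not> ((1 - eps) * ?W \<le> ht_sum T p f \<and> ht_sum T p f \<le> (1 + eps) * ?W)}
      \<le> measure_pmf.prob ?P ({f. ht_sum T p f \<le> (1 - eps) * ?W} \<union> {f. (1 + eps) * ?W \<le> ht_sum T p f})"
    by (intro measure_pmf.finite_measure_mono) auto
  also have "\<dots> \<le> measure_pmf.prob ?P {f. ht_sum T p f \<le> (1 - eps) * ?W}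
                  + measure_pmf.prob ?P {f. (1 + eps) * ?W \<le> ht_sum T p f}"
    by (intro measure_Un_le) auto
  finally show ?thesis using hi lo by simp
qed

lemma ht_sum_eq_card_if_prob_1:
  assumes "finite A" "T \<subseteq> A" "\<And>i. i \<in> T \<Longrightarrow> p i = 1"
    and "f \<in> set_pmf (bernoulli_sampling A p)"
  shows "ht_sum T p f = real (card T)"
proof -
  have "f i" if "i \<in> T" for i
  proof -
    have "f i \<in> set_pmf (bernoulli_pmf (p i))"
      using assms(4) that assms(2)
      by (auto simp: bernoulli_sampling_def set_Pi_pmf[OF assms(1)] PiE_dflt_def)
    then show ?thesis using assms(3)[OF that] by (cases "f i") (auto simp: set_pmf_iff)
  qed
  then show ?thesis using assms(3) by (simp add: ht_sum_def)
qed

section \<open>Minimum weights in linear codes\<close>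

text \<open>Puncturing at the support of c, keeping the length n by zeroing coordinates instead of
  deleting them.\<close>
definition puncture :: "nat ring \<Rightarrow> (nat \<Rightarrow> nat) \<Rightarrow> (nat \<Rightarrow> nat) \<Rightarrow> nat \<Rightarrow> nat" where
  "puncture R c v = (\<lambda>i. if c i \<noteq> \<zero>\<^bsub>R\<^esub> then \<zero>\<^bsub>R\<^esub> else v i)"

locale finite_field = field R for R :: "nat ring" (structure) +
  assumes finite_carrier: "finite (carrier R)"
begin

lemma card_carrier_ge_2: "2 \<le> card (carrier R)"
proof -
  have "card {\<zero>, \<one>} \<le> card (carrier R)" using finite_carrier by (intro card_mono) auto
  then show ?thesis using zero_not_one by simp
qed

lemma finite_vecs: "finite (vecs R n)"
proof -
  have "vecs R n \<subseteq> (\<lambda>g i. if i < n then g i else \<zero>) ` (PiE {..<n} (\<lambda>_. carrier R))"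
  proof
    fix v assume v: "v \<in> vecs R n"
    then have "v = (\<lambda>i. if i < n then restrict v {..<n} i else \<zero>)"
      by (auto simp: vecs_def fun_eq_iff)
    moreover have "restrict v {..<n} \<in> PiE {..<n} (\<lambda>_. carrier R)"
      using v by (auto simp: vecs_def)
    ultimately show "v \<in> (\<lambda>g i. if i < n then g i else \<zero>) ` (PiE {..<n} (\<lambda>_. carrier R))"
      by blast
  qed
  then show ?thesis
    by (rule finite_subset) (intro finite_imageI finite_PiE finite_lessThan finite_carrier)
qed

lemma linear_code_finite: "linear_code R n D \<Longrightarrow> finite D"
  using finite_vecs finite_subset unfolding linear_code_def by blast

lemma wt_pos: "i < n \<Longrightarrow> v i \<noteq> \<zero> \<Longrightarrow> 0 < wt R n v"
  unfolding wt_def by (subst card_gt_0_iff) auto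

lemma min_wt_attained:
  assumes "finite D" "i \<in> code_support R n D"
  obtains c where "c \<in> D" "c i \<noteq> \<zero>" "wt R n c = min_wt R n D i"
proof -
  have "{c\<in>D. c i \<noteq> \<zero>} \<noteq> {}" using assms(2) by (auto simp: code_support_def)
  then have "min_wt R n D i \<in> wt R n ` {c\<in>D. c i \<noteq> \<zero>}"
    unfolding min_wt_def using assms(1) by (intro Min_in) simp_all
  then show ?thesis using that by auto
qed

lemma min_wt_le: "finite D \<Longrightarrow> c \<in> D \<Longrightarrow> c i \<noteq> \<zero> \<Longrightarrow> min_wt R n D i \<le> wt R n c"
  unfolding min_wt_def by (intro Min_le) auto

lemma min_wt_pos:
  assumes "finite D" "i \<in> code_support R n D"
  shows "0 < min_wt R n D i"
proof -
  obtain c where c: "c \<in> D" "c i \<noteq> \<zero>" "wt R n c = min_wt R n D i"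
    using min_wt_attained[OF assms] .
  have "i < n" using assms(2) by (simp add: code_support_def)
  then show ?thesis using wt_pos[of i n c] c by simp
qed

lemma linear_code_puncture:
  assumes code: "linear_code R n D" and "c \<in> D"
  shows "linear_code R n (puncture R c ` D)"
proof -
  have c_out: "c i = \<zero>" if "n \<le> i" for i
    using assms that by (auto simp: linear_code_def vecs_def)
  have vadd: "vadd R n (puncture R c u) (puncture R c v) = puncture R c (vadd R n u v)" for u v
    using c_out by (auto simp: vadd_def puncture_def fun_eq_iff)
  have smult: "smult_vec R n a (puncture R c v) = puncture R c (smult_vec R n a v)"
    if "a \<in> carrier R" for a v
    using c_out that by (auto simp: smult_vec_def puncture_def fun_eq_iff)
  have zero: "puncture R c (zero_vec R n) = zero_vec R n"
    by (auto simp: puncture_def zero_vec_def)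
  show ?thesis
    unfolding linear_code_def
  proof (intro conjI ballI)
    show "puncture R c ` D \<subseteq> vecs R n"
      using code by (auto simp: linear_code_def vecs_def puncture_def)
    show "zero_vec R n \<in> puncture R c ` D"
      using code zero by (metis linear_code_def image_eqI)
  next
    fix u v assume "u \<in> puncture R c ` D" "v \<in> puncture R c ` D"
    then obtain u0 v0 where "u0 \<in> D" "v0 \<in> D" "u = puncture R c u0" "v = puncture R c v0"
      by blast
    moreover have "vadd R n u0 v0 \<in> D" using code \<open>u0 \<in> D\<close> \<open>v0 \<in> D\<close>
      by (simp add: linear_code_def)
    ultimately show "vadd R n u v \<in> puncture R c ` D" by (simp add: vadd)
  next
    fix a v assume "a \<in> carrier R" "v \<in> puncture R c ` D"
    then obtain v0 where "v0 \<in> D" "v = puncture R c v0" by blast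
    moreover have "smult_vec R n a v0 \<in> D" using code \<open>a \<in> carrier R\<close> \<open>v0 \<in> D\<close>
      by (simp add: linear_code_def)
    ultimately show "smult_vec R n a v \<in> puncture R c ` D"
      using smult[OF \<open>a \<in> carrier R\<close>] by simp
  qed
qed

text \<open>Every fibre of the puncturing map contains the q codewords v + a c.\<close>
lemma card_puncture_image:
  assumes code: "linear_code R n D" and cD: "c \<in> D" and j: "j < n" "c j \<noteq> \<zero>"
  shows "card (carrier R) * card (puncture R c ` D) \<le> card D"
proof -
  have fin: "finite D" using linear_code_finite[OF code] .
  have vecs: "\<And>v. v \<in> D \<Longrightarrow> v \<in> vecs R n" using code by (auto simp: linear_code_def)
  have fibre: "card (carrier R) \<le> card {u\<in>D. puncture R c u = puncture R c v}" if vD: "v \<in> D" for v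
  proof -
    define g where "g a = vadd R n v (smult_vec R n a c)" for a
    have v_carr: "v i \<in> carrier R" if "i < n" for i using vecs[OF vD] that by (simp add: vecs_def)
    have c_carr: "c i \<in> carrier R" if "i < n" for i using vecs[OF cD] that by (simp add: vecs_def)
    have v_out: "v i = \<zero>" if "\<not> i < n" for i using vecs[OF vD] that by (simp add: vecs_def)
    have "g a \<in> {u\<in>D. puncture R c u = puncture R c v}" if a: "a \<in> carrier R" for a
    proof -
      have "g a \<in> D" using code cD vD a by (simp add: linear_code_def g_def)
      moreover have "puncture R c (g a) = puncture R c v"
        using v_carr v_out a by (auto simp: puncture_def g_def vadd_def smult_vec_def)
      ultimately show ?thesis by simp
    qed
    then have "g ` carrier R \<subseteq> {u\<in>D. puncture R c u = puncture R c v}" by blast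
    moreover have "inj_on g (carrier R)"
    proof
      fix a b assume ab: "a \<in> carrier R" "b \<in> carrier R" "g a = g b"
      from ab(3) have "v j \<oplus> a \<otimes> c j = v j \<oplus> b \<otimes> c j"
        using j by (simp add: g_def vadd_def smult_vec_def fun_eq_iff) metis
      then have "a \<otimes> c j \<oplus> v j = b \<otimes> c j \<oplus> v j"
        using ab v_carr c_carr j by (simp add: a_comm)
      then have "a \<otimes> c j = b \<otimes> c j" using ab v_carr c_carr j by simp
      then show "a = b" using m_rcancel[of "c j" a b] j ab c_carr by simp
    qed
    ultimately have "card (g ` carrier R) \<le> card {u\<in>D. puncture R c u = puncture R c v}"
      using fin by (intro card_mono) auto
    then show ?thesis using card_image[OF \<open>inj_on g (carrier R)\<close>] by simp
  qed
  have "card D = (\<Sum>d\<in>puncture R c ` D. card {u\<in>D. puncture R c u = d})"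
    using sum.image_gen[OF fin, of "\<lambda>_. 1::nat" "puncture R c"] by simp
  also have "\<dots> \<ge> (\<Sum>d\<in>puncture R c ` D. card (carrier R))"
    using fibre by (intro sum_mono) auto
  finally show ?thesis by (simp add: mult.commute)
qed

lemma min_wt_puncture_le:
  assumes fin: "finite D" and i: "i \<in> code_support R n D" and ci: "c i = \<zero>"
  shows "i \<in> code_support R n (puncture R c ` D)"
    and "min_wt R n (puncture R c ` D) i \<le> min_wt R n D i"
proof -
  obtain v where v: "v \<in> D" "v i \<noteq> \<zero>" "wt R n v = min_wt R n D i"
    using min_wt_attained[OF fin i] .
  have pv: "puncture R c v \<in> puncture R c ` D" "puncture R c v i \<noteq> \<zero>"
    using v ci by (auto simp: puncture_def)
  then show "i \<in> code_support R n (puncture R c ` D)"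
    using i by (auto simp: code_support_def)
  have "wt R n (puncture R c v) \<le> wt R n v"
    unfolding wt_def by (intro card_mono) (auto simp: puncture_def)
  then show "min_wt R n (puncture R c ` D) i \<le> min_wt R n D i"
    using min_wt_le[OF finite_imageI[OF fin] pv, where n = n] v(3) by linarith
qed

lemma sum_inverse_min_wt_least_wt_support:
  assumes fin: "finite D" and cD: "c \<in> D" and c_pos: "0 < wt R n c"
    and least: "\<And>c'. c' \<in> D \<Longrightarrow> 0 < wt R n c' \<Longrightarrow> wt R n c \<le> wt R n c'"
  shows "(\<Sum>i\<in>{i. i < n \<and> c i \<noteq> \<zero>}. 1 / real (min_wt R n D i)) = 1"
proof -
  have "min_wt R n D i = wt R n c" if ci: "i < n" "c i \<noteq> \<zero>" for i
  proof -
    have i: "i \<in> code_support R n D" using cD ci by (auto simp: code_support_def)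
    obtain c' where "c' \<in> D" "c' i \<noteq> \<zero>" "wt R n c' = min_wt R n D i"
      using min_wt_attained[OF fin i] .
    then show ?thesis using min_wt_le[OF fin cD ci(2), where n = n] least wt_pos[OF ci(1)]
      by (metis le_antisym)
  qed
  then have "(\<Sum>i\<in>{i. i < n \<and> c i \<noteq> \<zero>}. 1 / real (min_wt R n D i))
      = (\<Sum>i\<in>{i. i < n \<and> c i \<noteq> \<zero>}. 1 / real (wt R n c))"
    by simp
  also have "\<dots> = 1" using c_pos by (simp add: wt_def card_gt_0_iff)
  finally show ?thesis .
qed

text \<open>Puncturing at a codeword c of least positive weight removes terms summing to exactly 1,
  divides the code size by at least q, and can only decrease the remaining minimal weights.\<close>
lemma sum_inverse_min_wt_le:
  assumes "linear_code R n D" "card D \<le> card (carrier R) ^ m"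
  shows "(\<Sum>i\<in>code_support R n D. 1 / real (min_wt R n D i)) \<le> real m"
  using assms
proof (induction m arbitrary: D)
  case 0
  then have "D = {zero_vec R n}"
    using linear_code_finite by (auto simp: linear_code_def card_le_Suc0_iff_eq)
  then show ?case by (simp add: code_support_def zero_vec_def)
next
  case (Suc m)
  have fin: "finite D" using linear_code_finite[OF Suc.prems(1)] .
  show ?case
  proof (cases "code_support R n D = {}")
    case False
    then obtain c0 where "c0 \<in> D \<and> 0 < wt R n c0" using wt_pos by (auto simp: code_support_def)
    from ex_has_least_nat[of "\<lambda>c. c \<in> D \<and> 0 < wt R n c", OF this, of "wt R n"]
    obtain c where cD: "c \<in> D" and c_pos: "0 < wt R n c"
      and least: "\<And>c'. c' \<in> D \<Longrightarrow> 0 < wt R n c' \<Longrightarrow> wt R n c \<le> wt R n c'" by blast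
    define Z where "Z = {i. i < n \<and> c i \<noteq> \<zero>}"
    define D' where "D' = puncture R c ` D"
    obtain j where j: "j < n" "c j \<noteq> \<zero>"
      using c_pos by (auto simp: wt_def card_gt_0_iff)
    have "card (carrier R) * card D' \<le> card (carrier R) * card (carrier R) ^ m"
      using card_puncture_image[OF Suc.prems(1) cD j] Suc.prems(2)
      unfolding D'_def power_Suc by (rule order_trans)
    then have "card D' \<le> card (carrier R) ^ m" using card_carrier_ge_2 by simp
    then have IH: "(\<Sum>i\<in>code_support R n D'. 1 / real (min_wt R n D' i)) \<le> real m"
      using Suc.IH linear_code_puncture[OF Suc.prems(1) cD] by (simp add: D'_def)
    have Z_sub: "Z \<subseteq> code_support R n D" using cD by (auto simp: Z_def code_support_def)
    have sum_Z: "(\<Sum>i\<in>Z. 1 / real (min_wt R n D i)) = 1"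
      unfolding Z_def by (rule sum_inverse_min_wt_least_wt_support[OF fin cD c_pos least])
    have rest: "i \<in> code_support R n D' \<and> min_wt R n D' i \<le> min_wt R n D i"
      if "i \<in> code_support R n D - Z" for i
      using min_wt_puncture_le[OF fin, where i = i and c = c] that
      by (auto simp: D'_def Z_def code_support_def)
    have "(\<Sum>i\<in>code_support R n D - Z. 1 / real (min_wt R n D i))
        \<le> (\<Sum>i\<in>code_support R n D - Z. 1 / real (min_wt R n D' i))"
      using rest min_wt_pos[OF finite_imageI[OF fin]] by (intro sum_mono frac_le) (auto simp: D'_def)
    also have "\<dots> \<le> (\<Sum>i\<in>code_support R n D'. 1 / real (min_wt R n D' i))"
      using rest by (intro sum_mono2) (auto simp: code_support_def)
    finally have rest_le: "(\<Sum>i\<in>code_support R n D - Z. 1 / real (min_wt R n D i))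
        \<le> (\<Sum>i\<in>code_support R n D'. 1 / real (min_wt R n D' i))" .
    have "finite (code_support R n D)" by (simp add: code_support_def)
    then have "(\<Sum>i\<in>code_support R n D. 1 / real (min_wt R n D i))
        = (\<Sum>i\<in>code_support R n D - Z. 1 / real (min_wt R n D i)) + (\<Sum>i\<in>Z. 1 / real (min_wt R n D i))"
      by (rule sum.subset_diff[OF Z_sub])
    then show ?thesis using rest_le sum_Z IH by simp
  qed simp
qed

lemma card_code_le:
  assumes code: "linear_code R n D" and dim: "code_dim R n D k"
  shows "card D \<le> card (carrier R) ^ k"
proof -
  obtain b where b: "\<forall>j<k. b j \<in> D" and D: "D = {lin_comb R n k a b |a. \<forall>j<k. a j \<in> carrier R}"
    using dim unfolding code_dim_def by blast
  have b_carr: "b j i \<in> carrier R" if "j < k" "i < n" for j i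
    using b that code by (auto simp: linear_code_def vecs_def)
  have restrict_eq: "lin_comb R n k a b = lin_comb R n k (restrict a {..<k}) b"
    if "\<forall>j<k. a j \<in> carrier R" for a
    unfolding lin_comb_def using that b_carr by (intro ext if_cong refl finsum_cong') auto
  have "D \<subseteq> (\<lambda>a. lin_comb R n k a b) ` PiE {..<k} (\<lambda>_. carrier R)"
  proof
    fix x assume "x \<in> D"
    then obtain a where a: "\<forall>j<k. a j \<in> carrier R" "x = lin_comb R n k a b"
      unfolding D by blast
    then show "x \<in> (\<lambda>a. lin_comb R n k a b) ` PiE {..<k} (\<lambda>_. carrier R)"
      using restrict_eq[OF a(1)] by (intro image_eqI[of _ _ "restrict a {..<k}"]) auto
  qed
  then have "card D \<le> card ((\<lambda>a. lin_comb R n k a b) ` PiE {..<k} (\<lambda>_. carrier R))"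
    using finite_carrier by (intro card_mono finite_imageI finite_PiE) auto
  also have "\<dots> \<le> card (PiE {..<k} (\<lambda>_. carrier R))"
    using finite_carrier by (intro card_image_le finite_PiE) auto
  also have "\<dots> = card (carrier R) ^ k" by (simp add: card_PiE)
  finally show ?thesis .
qed

end

section \<open>Importance sampling of coordinates\<close>

lemma power_mult_exp_neg_log_lt:
  assumes q: "2 \<le> q" and k: "1 \<le> k"
  shows "real q ^ k * (2 * exp (- (5 / 2 * real k * log 2 (real q)))) < 3 / 4"
proof -
  define L where "L = log 2 (real q)"
  have L: "1 \<le> L" using q by (simp add: L_def)
  have "real q ^ k = exp (real k * ln (real q))" using q by (simp add: exp_of_nat_mult)
  also have "ln (real q) = L * ln 2" using q by (simp add: L_def log_def)
  also have "L * ln 2 \<le> L" using L ln_2_less_1 by (simp add: mult_left_le)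
  then have "exp (real k * (L * ln 2)) \<le> exp (real k * L)"
    using mult_left_mono[of "L * ln 2" L "real k"] by simp
  finally have "real q ^ k * (2 * exp (- (5 / 2 * real k * L)))
      \<le> 2 * (exp (real k * L) * exp (- (5 / 2 * real k * L)))"
    by (simp add: mult_right_mono)
  also have "exp (real k * L) * exp (- (5 / 2 * real k * L)) = exp (- (3 / 2) * (real k * L))"
    by (simp flip: exp_add)
  also have "\<dots> \<le> exp (- (3 / 2))"
    using mult_mono[of 1 "real k" 1 L] k L by simp
  also have "2 * exp (- (3 / 2)) < (3 / 4 :: real)"
  proof -
    have "1 + 3/2 + (3/2)\<^sup>2 / 2 \<le> exp (3 / 2 :: real)" by (rule exp_lower_Taylor_quadratic) simp
    then show ?thesis by (simp add: exp_minus field_simps power2_eq_square)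
  qed
  finally show ?thesis by (simp add: L_def)
qed

locale sparsification = finite_field R for R :: "nat ring" (structure) +
  fixes n :: nat and Cd :: "(nat \<Rightarrow> nat) set" and k :: nat and eps :: real
  assumes code: "linear_code R n Cd" and dim: "code_dim R n Cd k" and k_pos: "1 \<le> k"
    and eps_pos: "0 < eps" and eps_lt_1: "eps < 1"
begin

abbreviation "supp \<equiv> code_support R n Cd"
abbreviation "p \<equiv> samp_prob R n Cd k eps"
abbreviation "log_q \<equiv> log 2 (real (card (carrier R)))"
abbreviation "sampling \<equiv> bernoulli_sampling supp p"

lemma log_q_ge_1: "1 \<le> log_q"
  using card_carrier_ge_2 by simp

lemma finite_supp: "finite supp"
  by (simp add: code_support_def)

lemma finite_code: "finite Cd"
  using linear_code_finite[OF code] .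

lemma samp_prob_le_1: "0 \<le> p i \<and> p i \<le> 1"
  using log_q_ge_1 eps_pos by (simp add: samp_prob_def)

lemma samp_prob_pos: "i \<in> supp \<Longrightarrow> 0 < p i"
  using log_q_ge_1 eps_pos k_pos min_wt_pos[OF finite_code] by (simp add: samp_prob_def)

lemma samp_prob_eq_1:
  assumes "i \<in> supp" "eps\<^sup>2 * real (min_wt R n Cd i) \<le> 10 * real k * log_q"
  shows "p i = 1"
  using assms eps_pos min_wt_pos[OF finite_code assms(1)] by (simp add: samp_prob_def field_simps)

lemma inverse_samp_prob_le:
  assumes "i \<in> supp"
  shows "1 / p i \<le> max 1 (eps\<^sup>2 * real (min_wt R n Cd i) / (10 * real k * log_q))"
  using assms log_q_ge_1 k_pos eps_pos min_wt_pos[OF finite_code assms]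
  by (auto simp: samp_prob_def min_def)

lemma sum_samp_prob_le: "(\<Sum>i\<in>supp. p i) \<le> 10 * real k ^ 2 * log_q / eps\<^sup>2"
proof -
  have "(\<Sum>i\<in>supp. p i) \<le> (\<Sum>i\<in>supp. 10 * real k * log_q / eps\<^sup>2 * (1 / real (min_wt R n Cd i)))"
    by (intro sum_mono) (simp add: samp_prob_def field_simps)
  also have "\<dots> = 10 * real k * log_q / eps\<^sup>2 * (\<Sum>i\<in>supp. 1 / real (min_wt R n Cd i))"
    by (simp add: sum_distrib_left)
  also have "\<dots> \<le> 10 * real k * log_q / eps\<^sup>2 * real k"
    using sum_inverse_min_wt_le[OF code card_code_le[OF code dim]] log_q_ge_1
    by (intro mult_left_mono) auto
  finally show ?thesis by (simp add: power2_eq_square field_simps)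
qed

lemma prob_sample_oversized:
  "measure_pmf.prob sampling {f. 40 * real k ^ 2 * log_q / eps\<^sup>2 < real (card {i\<in>supp. f i})}
     \<le> 1 / 4"
proof -
  have s: "0 < 40 * real k ^ 2 * log_q / eps\<^sup>2"
    using k_pos log_q_ge_1 eps_pos by (intro divide_pos_pos mult_pos_pos) auto
  have "measure_pmf.prob sampling {f. 40 * real k ^ 2 * log_q / eps\<^sup>2 < real (card {i\<in>supp. f i})}
      \<le> (\<Sum>i\<in>supp. p i) / (40 * real k ^ 2 * log_q / eps\<^sup>2)"
    using samp_prob_le_1 by (intro prob_card_bernoulli_sampling_gt finite_supp s) auto
  also have "\<dots> \<le> (10 * real k ^ 2 * log_q / eps\<^sup>2) / (40 * real k ^ 2 * log_q / eps\<^sup>2)"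
    using s sum_samp_prob_le by (intro divide_right_mono) auto
  also have "\<dots> = 1 / 4" using k_pos log_q_ge_1 eps_pos by (simp add: field_simps)
  finally show ?thesis .
qed

text \<open>A codeword of weight W is nonzero only at coordinates with min_wt \<le> W, so either all of them
  are sampled surely, or every weight 1 / p i is at most M = eps^2 W / (10 k log q), which makes
  the Chernoff exponent eps^2 W / (4 M) equal to 5/2 k log q.\<close>
lemma prob_codeword_misweighted:
  assumes v: "v \<in> Cd"
  defines "T \<equiv> {i. i < n \<and> v i \<noteq> \<zero>}"
  shows "measure_pmf.prob sampling
           {f. \<not> ((1 - eps) * real (wt R n v) \<le> ht_sum T p f \<and> ht_sum T p f \<le> (1 + eps) * real (wt R n v))}
         \<le> 2 * exp (- (5 / 2 * real k * log_q))"
proof -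
  define W where "W = real (card T)"
  have wt_v: "real (wt R n v) = W" by (simp add: W_def T_def wt_def)
  have T_supp: "T \<subseteq> supp" using v by (auto simp: T_def code_support_def)
  have min_wt_le_W: "real (min_wt R n Cd i) \<le> W" if "i \<in> T" for i
    using min_wt_le[OF finite_code v, of i n] that wt_v by (simp add: T_def)
  have kL: "0 < 10 * real k * log_q" using k_pos log_q_ge_1 by simp
  show ?thesis
  proof (cases "eps\<^sup>2 * W \<le> 10 * real k * log_q")
    case True
    have "p i = 1" if "i \<in> T" for i
      using that T_supp min_wt_le_W[OF that] True eps_pos
      by (intro samp_prob_eq_1) (auto intro: order_trans[OF mult_left_mono])
    then have "ht_sum T p f = W" if "f \<in> set_pmf sampling" for f
      using ht_sum_eq_card_if_prob_1[OF finite_supp T_supp _ that] by (simp add: W_def)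
    moreover have "(1 - eps) * W \<le> W" "W \<le> (1 + eps) * W"
      using eps_pos by (simp_all add: W_def algebra_simps)
    ultimately have "measure_pmf.prob sampling
        {f. \<not> ((1 - eps) * W \<le> ht_sum T p f \<and> ht_sum T p f \<le> (1 + eps) * W)} = 0"
      by (subst measure_pmf_zero_iff) auto
    then show ?thesis by (simp add: wt_v)
  next
    case False
    define M where "M = eps\<^sup>2 * W / (10 * real k * log_q)"
    have M: "1 < M" using False kL by (simp add: M_def field_simps)
    have "0 < p i \<and> 1 / p i \<le> M" if "i \<in> T" for i
    proof -
      have "eps\<^sup>2 * real (min_wt R n Cd i) / (10 * real k * log_q) \<le> M"
        unfolding M_def using min_wt_le_W[OF that] kL
        by (intro divide_right_mono mult_left_mono) auto
      then show ?thesis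
        using that T_supp samp_prob_pos inverse_samp_prob_le[of i] M by fastforce
    qed
    from prob_ht_sum_deviates[OF finite_supp T_supp _ this _ eps_pos] M eps_lt_1 samp_prob_le_1
    have "measure_pmf.prob sampling
        {f. \<not> ((1 - eps) * W \<le> ht_sum T p f \<and> ht_sum T p f \<le> (1 + eps) * W)}
        \<le> 2 * exp (- (eps\<^sup>2 * W / (4 * M)))"
      by (simp add: W_def)
    also have "eps\<^sup>2 * W / (4 * M) = 5 / 2 * real k * log_q"
    proof -
      have "W \<noteq> 0" using False kL by auto
      then show ?thesis using log_q_ge_1 k_pos eps_pos by (simp add: M_def field_simps)
    qed
    finally show ?thesis by (simp add: wt_v)
  qed
qed

lemma is_sparsifier_sample:
  assumes size: "real (card {i\<in>supp. f i}) \<le> 40 * real k ^ 2 * log_q / eps\<^sup>2"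
    and weights: "\<And>v. v \<in> Cd \<Longrightarrow>
      (1 - eps) * real (wt R n v) \<le> ht_sum {i. i < n \<and> v i \<noteq> \<zero>} p f \<and>
      ht_sum {i. i < n \<and> v i \<noteq> \<zero>} p f \<le> (1 + eps) * real (wt R n v)"
  shows "is_sparsifier R n Cd eps (40 * real k ^ 2 * log_q / eps\<^sup>2) {i\<in>supp. f i} (\<lambda>i. 1 / p i)"
proof -
  have "(\<Sum>i\<in>{i\<in>{i\<in>supp. f i}. v i \<noteq> \<zero>}. 1 / p i) = ht_sum {i. i < n \<and> v i \<noteq> \<zero>} p f"
    if "v \<in> Cd" for v
  proof -
    have "{i\<in>{i\<in>supp. f i}. v i \<noteq> \<zero>} = {i\<in>{i. i < n \<and> v i \<noteq> \<zero>}. f i}"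
      using that by (auto simp: code_support_def)
    then show ?thesis
      using sum.inter_filter[of "{i. i < n \<and> v i \<noteq> \<zero>}" "\<lambda>i. 1 / p i" f]
      by (simp only: ht_sum_def finite_Collect_conjI finite_Collect_less_nat simp_thms)
  qed
  then show ?thesis
    using size weights samp_prob_le_1 by (auto simp: is_sparsifier_def code_support_def)
qed

lemma prob_sparsifier_pos:
  "0 < measure_pmf.prob (sample_pmf R n Cd k eps)
         {S. is_sparsifier R n Cd eps (40 * real k ^ 2 * log_q / eps\<^sup>2) S (\<lambda>i. 1 / p i)}"
proof -
  define Good where "Good S \<longleftrightarrow>
    is_sparsifier R n Cd eps (40 * real k ^ 2 * log_q / eps\<^sup>2) S (\<lambda>i. 1 / p i)" for S
  define Oversized where
    "Oversized = {f. 40 * real k ^ 2 * log_q / eps\<^sup>2 < real (card {i\<in>supp. f i})}"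
  define Misweighted where "Misweighted v = {f. \<not> ((1 - eps) * real (wt R n v) \<le> ht_sum {i. i < n \<and> v i \<noteq> \<zero>} p f
      \<and> ht_sum {i. i < n \<and> v i \<noteq> \<zero>} p f \<le> (1 + eps) * real (wt R n v))}" for v
  have "UNIV - {f. Good {i\<in>supp. f i}} \<subseteq> Oversized \<union> (\<Union>v\<in>Cd. Misweighted v)"
    using is_sparsifier_sample
    by (force simp: Good_def Oversized_def Misweighted_def not_less)
  then have "measure_pmf.prob sampling (UNIV - {f. Good {i\<in>supp. f i}})
      \<le> measure_pmf.prob sampling (Oversized \<union> (\<Union>v\<in>Cd. Misweighted v))"
    by (intro measure_pmf.finite_measure_mono) auto
  also have "\<dots> \<le> measure_pmf.prob sampling Oversized + measure_pmf.prob sampling (\<Union>v\<in>Cd. Misweighted v)"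
    by (intro measure_Un_le) auto
  also have "\<dots> \<le> measure_pmf.prob sampling Oversized + (\<Sum>v\<in>Cd. measure_pmf.prob sampling (Misweighted v))"
    by (intro add_left_mono measure_pmf.finite_measure_subadditive_finite finite_code) auto
  also have "\<dots> \<le> 1 / 4 + (\<Sum>v\<in>Cd. 2 * exp (- (5 / 2 * real k * log_q)))"
    using prob_sample_oversized prob_codeword_misweighted
    by (intro add_mono sum_mono) (auto simp: Oversized_def Misweighted_def)
  also have "\<dots> < 1"
  proof -
    have "real (card Cd) \<le> real (card (carrier R)) ^ k"
      using card_code_le[OF code dim] by (metis of_nat_le_iff of_nat_power)
    then have "real (card Cd) * (2 * exp (- (5 / 2 * real k * log_q)))
        \<le> real (card (carrier R)) ^ k * (2 * exp (- (5 / 2 * real k * log_q)))"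
      by (intro mult_right_mono) auto
    moreover have "(\<Sum>v\<in>Cd. 2 * exp (- (5 / 2 * real k * log_q)))
        = real (card Cd) * (2 * exp (- (5 / 2 * real k * log_q)))" by simp
    ultimately show ?thesis using power_mult_exp_neg_log_lt[OF card_carrier_ge_2 k_pos] by linarith
  qed
  finally have "0 < measure_pmf.prob sampling {f. Good {i\<in>supp. f i}}"
    using measure_pmf.prob_compl[of "{f. Good {i\<in>supp. f i}}" sampling] by simp
  then show ?thesis
    by (simp add: Good_def sample_pmf_def bernoulli_sampling_def)
qed

end

theorem mainTheorem7:
  "\<exists>C::real. \<forall>(R::nat ring) (n::nat) (Cd::(nat \<Rightarrow> nat) set) (k::nat) (eps::real).
     field R \<and> finite (carrier R) \<and> linear_code R n Cd \<and> code_dim R n Cd k \<and> 1 \<le> k \<and>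
     0 < eps \<and> eps < 1 \<longrightarrow>
       (\<exists>S w'. is_sparsifier R n Cd eps
                 (C * real k ^ 2 * log 2 (real (card (carrier R))) / eps\<^sup>2) S w') \<and>
       measure_pmf.prob (sample_pmf R n Cd k eps)
         {S. is_sparsifier R n Cd eps
               (C * real k ^ 2 * log 2 (real (card (carrier R))) / eps\<^sup>2) S
               (\<lambda>i. 1 / samp_prob R n Cd k eps i)} > 0"
proof (intro exI[of _ 40] allI impI)
  fix R :: "nat ring" and n :: nat and Cd :: "(nat \<Rightarrow> nat) set" and k :: nat and eps :: real
  assume "field R \<and> finite (carrier R) \<and> linear_code R n Cd \<and> code_dim R n Cd k \<and> 1 \<le> k \<and>
     0 < eps \<and> eps < 1"
  then interpret sparsification R n Cd k eps
    by (intro sparsification.intro finite_field.intro finite_field_axioms.intro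
        sparsification_axioms.intro) auto
  have pos: "0 < measure_pmf.prob (sample_pmf R n Cd k eps)
      {S. is_sparsifier R n Cd eps (40 * real k ^ 2 * log_q / eps\<^sup>2) S (\<lambda>i. 1 / p i)}"
    by (rule prob_sparsifier_pos)
  then obtain S where "is_sparsifier R n Cd eps (40 * real k ^ 2 * log_q / eps\<^sup>2) S (\<lambda>i. 1 / p i)"
    using measure_pmf_zero_iff[of "sample_pmf R n Cd k eps"] by force
  with pos show "(\<exists>S w'. is_sparsifier R n Cd eps (40 * real k ^ 2 * log_q / eps\<^sup>2) S w') \<and>
      measure_pmf.prob (sample_pmf R n Cd k eps)
        {S. is_sparsifier R n Cd eps (40 * real k ^ 2 * log_q / eps\<^sup>2) S (\<lambda>i. 1 / p i)} > 0"
    by blast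
qed

end
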